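(* Let $l_1(\Gamma, \alpha, \mathcal{A})$ be the set of all families $a = \{a_g\}_{g \in \Gamma}$ of elements of $\mathcal{A}$ such that $a_x \in \mathcal{A}\alpha_x(1)$ and $a_{-x} \in \alpha_x(1)\mathcal{A}$ for all $x \in \Gamma^+$, and $\sum_{g \in \Gamma} \|a_g\| < \infty$, normed by $\|a\| = \sum_{g\in\Gamma}\|a_g\|$. For $a, b \in l_1(\Gamma, \alpha, \mathcal{A})$ define $a\cdot b$ by $$(a \cdot b)_g := \begin{cases} \sum_{\substack{g=x-y \\ x,y>0}} a_x \alpha_{x-y}(b_{-y}) + \sum_{\substack{g=y-x \\ x,y>0}} L_x(a_{-x} b_y) + \sum_{\substack{g=x+y \\ x,y \geq 0}} a_x \alpha_x(b_y), & \text{if } 0 \leq g, \\ \sum_{\substack{g=x-y \\ x,y>0}} \alpha_{y-x}(a_x) b_{-y} + \sum_{\substack{g=y-x \\ x,y>0}} L_y(a_{-x} b_y) + \sum_{\substack{g=-x-y \\ x,y \geq 0}} \alpha_y(a_{-x}) b_{-y}, & \text{if } g < 0, \end{cases}$$ where $x, y$ run through $\Gamma^+$. Then this multiplication is well defined (i.e. $a\cdot b \in l_1(\Gamma,\alpha,\mathcal{A})$), and $\|a \cdot b\| \leq \|a\| \cdot \|b\|$ for all $a, b \in l_1(\Gamma, \alpha, \mathcal{A})$.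
   Context: $\mathcal{A}$ is a C*-algebra with identity $1$, $\Gamma$ is a totally ordered abelian group with identity $0$ and positive cone $\Gamma^+ = \{x \in \Gamma: 0 \le x\}$, and $\alpha: \Gamma^+ \to \mathrm{End}(\mathcal{A})$ is a semigroup homomorphism ($\alpha_0 = \mathrm{Id}$, $\alpha_x\circ\alpha_y = \alpha_{x+y}$) by *-endomorphisms. The system $(\mathcal{A}, \Gamma^+, \alpha)$ is assumed finely representable, equivalently there is a (unique) complete transfer action $L$: continuous linear positive maps $L_x:\mathcal{A}\to\mathcal{A}$, $x\in\Gamma^+$, with $L_{x+y} = L_y \circ L_x$, $L_x(\alpha_x(a)b) = aL_x(b)$ and $\alpha_x(L_x(a)) = \alpha_x(1)a\alpha_x(1)$ for all $a,b\in\mathcal{A}$, $x,y\in\Gamma^+$. *)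

theory Defs
  imports "HOL-Analysis.Analysis"
begin

class cstar_algebra = real_normed_algebra_1 + banach +
  fixes scaleC :: "complex \<Rightarrow> 'a \<Rightarrow> 'a"
    and cstar :: "'a \<Rightarrow> 'a"
  assumes scaleR_scaleC: "scaleR r a = scaleC (complex_of_real r) a"
    and scaleC_add_right: "scaleC c (a + b) = scaleC c a + scaleC c b"
    and scaleC_add_left: "scaleC (c + d) a = scaleC c a + scaleC d a"
    and scaleC_scaleC: "scaleC c (scaleC d a) = scaleC (c * d) a"
    and scaleC_one: "scaleC 1 a = a"
    and norm_scaleC: "norm (scaleC c a) = cmod c * norm a"
    and mult_scaleC_left: "scaleC c a * b = scaleC c (a * b)"
    and mult_scaleC_right: "a * scaleC c b = scaleC c (a * b)"
    and cstar_cstar: "cstar (cstar a) = a"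
    and cstar_add: "cstar (a + b) = cstar a + cstar b"
    and cstar_scaleC: "cstar (scaleC c a) = scaleC (cnj c) (cstar a)"
    and cstar_mult: "cstar (a * b) = cstar b * cstar a"
    and cstar_identity: "norm (cstar a * a) = norm a * norm a"

definition positive_elem :: "'a::cstar_algebra \<Rightarrow> bool" where
  "positive_elem a \<longleftrightarrow> (\<exists>b. a = cstar b * b)"

definition clinear_map :: "('a::cstar_algebra \<Rightarrow> 'b::cstar_algebra) \<Rightarrow> bool" where
  "clinear_map f \<longleftrightarrow> (\<forall>a b. f (a + b) = f a + f b) \<and> (\<forall>c a. f (scaleC c a) = scaleC c (f a))"

definition star_endo :: "('a::cstar_algebra \<Rightarrow> 'a) \<Rightarrow> bool" where
  "star_endo f \<longleftrightarrow> clinear_map f \<and> (\<forall>a b. f (a * b) = f a * f b) \<and> (\<forall>a. f (cstar a) = cstar (f a))"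

definition endo_action :: "('g::linordered_ab_group_add \<Rightarrow> 'a::cstar_algebra \<Rightarrow> 'a) \<Rightarrow> bool" where
  "endo_action \<alpha> \<longleftrightarrow> \<alpha> 0 = id \<and> (\<forall>x y. 0 \<le> x \<longrightarrow> 0 \<le> y \<longrightarrow> \<alpha> (x + y) = \<alpha> x \<circ> \<alpha> y)
     \<and> (\<forall>x. 0 \<le> x \<longrightarrow> star_endo (\<alpha> x))"

definition complete_transfer_action ::
  "('g::linordered_ab_group_add \<Rightarrow> 'a::cstar_algebra \<Rightarrow> 'a) \<Rightarrow> ('g \<Rightarrow> 'a \<Rightarrow> 'a) \<Rightarrow> bool" where
  "complete_transfer_action \<alpha> L \<longleftrightarrow>
     (\<forall>x. 0 \<le> x \<longrightarrow> continuous_on UNIV (L x) \<and> clinear_map (L x)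
                    \<and> (\<forall>a. positive_elem a \<longrightarrow> positive_elem (L x a)))
   \<and> (\<forall>x y. 0 \<le> x \<longrightarrow> 0 \<le> y \<longrightarrow> L (x + y) = L y \<circ> L x)
   \<and> (\<forall>x a b. 0 \<le> x \<longrightarrow> L x (\<alpha> x a * b) = a * L x b)
   \<and> (\<forall>x a. 0 \<le> x \<longrightarrow> \<alpha> x (L x a) = \<alpha> x 1 * a * \<alpha> x 1)"

definition l1 :: "('g::linordered_ab_group_add \<Rightarrow> 'a::cstar_algebra \<Rightarrow> 'a) \<Rightarrow> ('g \<Rightarrow> 'a) set" where
  "l1 \<alpha> = {a. (\<forall>x. 0 \<le> x \<longrightarrow> a x \<in> {c * \<alpha> x 1 | c. True} \<and> a (- x) \<in> {\<alpha> x 1 * c | c. True})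
              \<and> (\<lambda>g. norm (a g)) summable_on UNIV}"

definition l1_norm :: "('g \<Rightarrow> 'a::real_normed_vector) \<Rightarrow> real" where
  "l1_norm a = (\<Sum>\<^sub>\<infinity>g. norm (a g))"

definition prod_terms ::
  "('g::linordered_ab_group_add \<Rightarrow> 'a::cstar_algebra \<Rightarrow> 'a) \<Rightarrow> ('g \<Rightarrow> 'a \<Rightarrow> 'a) \<Rightarrow> ('g \<Rightarrow> 'a) \<Rightarrow> ('g \<Rightarrow> 'a)
    \<Rightarrow> 'g \<Rightarrow> (('g \<times> 'g \<Rightarrow> 'a) \<times> ('g \<times> 'g) set) list" where
  "prod_terms \<alpha> L a b g =
    (if 0 \<le> g then
      [ ((\<lambda>(x, y). a x * \<alpha> (x - y) (b (- y))), {(x, y). 0 < x \<and> 0 < y \<and> g = x - y}),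
        ((\<lambda>(x, y). L x (a (- x) * b y)),        {(x, y). 0 < x \<and> 0 < y \<and> g = y - x}),
        ((\<lambda>(x, y). a x * \<alpha> x (b y)),            {(x, y). 0 \<le> x \<and> 0 \<le> y \<and> g = x + y}) ]
     else
      [ ((\<lambda>(x, y). \<alpha> (y - x) (a x) * b (- y)),  {(x, y). 0 < x \<and> 0 < y \<and> g = x - y}),
        ((\<lambda>(x, y). L y (a (- x) * b y)),        {(x, y). 0 < x \<and> 0 < y \<and> g = y - x}),
        ((\<lambda>(x, y). \<alpha> y (a (- x)) * b (- y)),    {(x, y). 0 \<le> x \<and> 0 \<le> y \<and> g = - x - y}) ])"

definition l1_mult ::
  "('g::linordered_ab_group_add \<Rightarrow> 'a::cstar_algebra \<Rightarrow> 'a) \<Rightarrow> ('g \<Rightarrow> 'a \<Rightarrow> 'a) \<Rightarrow> ('g \<Rightarrow> 'a) \<Rightarrow> ('g \<Rightarrow> 'a) \<Rightarrow> 'g \<Rightarrow> 'a" where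
  "l1_mult \<alpha> L a b g = (\<Sum>(f, S)\<leftarrow>prod_terms \<alpha> L a b g. infsum f S)"

end

theory Submission
  imports Defs "HOL-Computational_Algebra.Formal_Power_Series"
begin

text \<open>In each of the three sums defining \<open>(a \<cdot> b)\<^sub>g\<close> the summation index determines the
  index \<open>u = \<plusminus>x\<close> of the \<open>a\<close>-factor, the remaining factor is the \<open>b\<close>-entry at \<open>g - u\<close>,
  and the three ranges of \<open>u\<close> are disjoint. If \<open>\<alpha>\<^sub>x\<close> and \<open>L\<^sub>x\<close> are contractions, the
  product is therefore dominated by the norm convolution \<open>\<Sum>\<^sub>u \<parallel>a\<^sub>u\<parallel> \<parallel>b\<^sub>g\<^sub>-\<^sub>u\<parallel>\<close>, whose
  total sum is \<open>\<parallel>a\<parallel> \<parallel>b\<parallel>\<close>.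

  A *-endomorphism is contractive because a self-adjoint \<open>h\<close> with \<open>\<parallel>h\<parallel> < t\<close> is the real
  part of \<open>t\<close> times a unitary, built from the binomial series of \<open>\<surd>(1 - h\<^sup>2/t\<^sup>2)\<close>.
  Positivity makes \<open>L\<^sub>x\<close> *-preserving, so \<open>L\<^sub>x(c)\<^sup>* L\<^sub>x(c) = L\<^sub>x(\<alpha>\<^sub>x(1) c\<^sup>* \<alpha>\<^sub>x(1) c)\<close>;
  the C*-identity then gives \<open>\<parallel>L\<^sub>x\<parallel> \<le> \<surd>\<parallel>L\<^sub>x\<parallel>\<close>. The support conditions on \<open>a \<cdot> b\<close>
  follow from the module property of \<open>L\<^sub>x\<close> and its adjoint \<open>L\<^sub>x(c \<alpha>\<^sub>x(d)) = L\<^sub>x(c) d\<close>.\<close>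

lemma cstar_zero [simp]: "cstar (0::'a::cstar_algebra) = 0"
  using cstar_add[of "0::'a" 0] by simp

lemma cstar_one [simp]: "cstar (1::'a::cstar_algebra) = 1"
proof -
  have "cstar (1::'a) = cstar 1 * cstar (cstar 1)"
    by (simp only: cstar_cstar mult_1_right)
  also have "\<dots> = cstar (cstar 1 * 1)"
    by (rule cstar_mult[symmetric])
  finally show ?thesis
    by (simp add: cstar_cstar)
qed

lemma cstar_minus: "cstar (- (a::'a::cstar_algebra)) = - cstar a"
  using cstar_add[of a "-a"] by (simp add: eq_neg_iff_add_eq_0 add.commute)

lemma cstar_diff: "cstar ((a::'a::cstar_algebra) - b) = cstar a - cstar b"
  using cstar_add[of a "-b"] cstar_minus[of b] by simp

lemma cstar_scaleR: "cstar (r *\<^sub>R (a::'a::cstar_algebra)) = r *\<^sub>R cstar a"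
  by (simp add: scaleR_scaleC cstar_scaleC)

lemma cstar_power: "cstar ((a::'a::cstar_algebra) ^ n) = cstar a ^ n"
  by (induction n) (simp_all add: cstar_mult power_Suc2 power_commutes)

lemma norm_cstar [simp]: "norm (cstar (a::'a::cstar_algebra)) = norm a"
proof -
  have le: "norm b \<le> norm (cstar b)" for b :: 'a
  proof (cases "b = 0")
    case False
    have "norm b * norm b \<le> norm (cstar b) * norm b"
      using norm_mult_ineq[of "cstar b" b] by (simp add: cstar_identity)
    then show ?thesis
      using False by simp
  qed simp
  show ?thesis
    using le[of a] le[of "cstar a"] by (simp add: cstar_cstar)
qed

lemma bounded_linear_cstar: "bounded_linear (cstar :: 'a::cstar_algebra \<Rightarrow> 'a)"
  by (rule bounded_linear_intro[where K = 1]) (auto simp: cstar_add cstar_scaleR)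

lemma scaleC_zero_left [simp]: "scaleC 0 (a::'a::cstar_algebra) = 0"
  using scaleR_scaleC[of 0 a] by simp

lemma scaleC_minus_left: "scaleC (- c) (a::'a::cstar_algebra) = - scaleC c a"
  using scaleC_add_left[of c "- c" a] by (simp add: eq_neg_iff_add_eq_0 add.commute)

lemma scaleC_minus_right: "scaleC c (- (a::'a::cstar_algebra)) = - scaleC c a"
proof -
  have "- a = scaleC (- 1) a"
    using scaleR_scaleC[of "-1" a] by simp
  then show ?thesis
    by (metis scaleC_scaleC mult_minus1_right scaleC_minus_left)
qed

lemma norm_projection_le_one:
  assumes "cstar p = p" and "p * p = (p::'a::cstar_algebra)"
  shows "norm p \<le> 1"
proof -
  have "norm p * norm p = norm p"
    using cstar_identity[of p] assms by simp
  then show ?thesis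
    by (cases "norm p = 0") auto
qed

lemma clinear_mapD:
  assumes "clinear_map f"
  shows "f (a + b) = f a + f b" and "f (scaleC c a) = scaleC c (f a)" and "f (r *\<^sub>R a) = r *\<^sub>R f a"
    and "f 0 = 0" and "f (- a) = - f a" and "f (a - b) = f a - f b"
proof -
  show add: "f (a + b) = f a + f b" for a b
    using assms by (simp add: clinear_map_def)
  show "f (scaleC c a) = scaleC c (f a)"
    using assms by (simp add: clinear_map_def)
  show scaleR: "f (r *\<^sub>R a) = r *\<^sub>R f a" for r a
    using assms by (simp add: clinear_map_def scaleR_scaleC)
  show "f 0 = 0"
    using scaleR[of 0 0] by simp
  show minus: "f (- a) = - f a" for a
    using scaleR[of "-1" a] by simp
  show "f (a - b) = f a - f b"
    using add[of a "- b"] minus[of b] by simp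
qed

section \<open>The binomial series of the square root\<close>

text \<open>Taylor coefficients of \<open>\<surd>(1 - x)\<close> at \<open>0\<close>.\<close>

definition sqrt_one_minus_coeff :: "nat \<Rightarrow> real" where
  "sqrt_one_minus_coeff n = (-1) ^ n * ((1/2) gchoose n)"

definition sqrt_one_minus :: "'a::{real_normed_algebra_1, banach} \<Rightarrow> 'a" where
  "sqrt_one_minus x = (\<Sum>n. sqrt_one_minus_coeff n *\<^sub>R x ^ n)"

lemma abs_sqrt_one_minus_coeff_le: "\<bar>sqrt_one_minus_coeff n\<bar> \<le> 1"
proof (induction n)
  case 0
  then show ?case
    by (simp add: sqrt_one_minus_coeff_def)
next
  case (Suc k)
  have "of_nat (Suc k) * ((1/2::real) gchoose Suc k) = (1/2 - of_nat k) * ((1/2) gchoose k)"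
    using gbinomial_mult_1[of "1/2::real" k] by (simp add: algebra_simps)
  then have "\<bar>(1/2::real) gchoose Suc k\<bar> * of_nat (Suc k) = \<bar>1/2 - of_nat k\<bar> * \<bar>(1/2) gchoose k\<bar>"
    by (metis abs_mult abs_of_nat mult.commute)
  also have "\<dots> \<le> of_nat (Suc k) * 1"
    using Suc.IH by (intro mult_mono) (auto simp: sqrt_one_minus_coeff_def abs_mult)
  finally show ?case
    by (simp add: sqrt_one_minus_coeff_def abs_mult)
qed

lemma sqrt_one_minus_coeff_convolution:
  "(\<Sum>i\<le>k. sqrt_one_minus_coeff i * sqrt_one_minus_coeff (k - i)) = (-1) ^ k * real (1 choose k)"
proof -
  have "(\<Sum>i\<le>k. sqrt_one_minus_coeff i * sqrt_one_minus_coeff (k - i))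
      = (-1) ^ k * (\<Sum>i\<le>k. ((1/2::real) gchoose i) * ((1/2) gchoose (k - i)))"
    unfolding sum_distrib_left
  proof (rule sum.cong)
    fix i assume "i \<in> {..k}"
    then have "(-1::real) ^ i * (-1) ^ (k - i) = (-1) ^ k"
      by (simp flip: power_add)
    then show "sqrt_one_minus_coeff i * sqrt_one_minus_coeff (k - i)
        = (-1) ^ k * (((1/2::real) gchoose i) * ((1/2) gchoose (k - i)))"
      unfolding sqrt_one_minus_coeff_def by (metis mult.assoc mult.left_commute)
  qed simp
  also have "\<dots> = (-1) ^ k * real (1 choose k)"
    using gbinomial_Vandermonde[of "1/2::real" "1/2" k] binomial_gbinomial[of 1 k, where 'a = real]
    by (simp add: atMost_atLeast0)
  finally show ?thesis .
qed

lemma summable_norm_sqrt_one_minus_series: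
  fixes x :: "'a::{real_normed_algebra_1, banach}"
  assumes "norm x < 1"
  shows "summable (\<lambda>n. norm (sqrt_one_minus_coeff n *\<^sub>R x ^ n))"
proof (rule summable_comparison_test')
  show "summable (\<lambda>n. norm x ^ n)"
    using assms by (simp add: summable_geometric)
  fix n
  have "\<bar>sqrt_one_minus_coeff n\<bar> * norm (x ^ n) \<le> 1 * norm x ^ n"
    using abs_sqrt_one_minus_coeff_le[of n] norm_power_ineq[of x n] by (intro mult_mono) auto
  then show "norm (norm (sqrt_one_minus_coeff n *\<^sub>R x ^ n)) \<le> norm x ^ n"
    by simp
qed

lemma sqrt_one_minus_square:
  fixes x :: "'a::{real_normed_algebra_1, banach}"
  assumes "norm x < 1"
  shows "sqrt_one_minus x * sqrt_one_minus x = 1 - x"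
proof -
  let ?c = sqrt_one_minus_coeff
  note ns = summable_norm_sqrt_one_minus_series[OF assms]
  have "sqrt_one_minus x * sqrt_one_minus x
      = (\<Sum>k. \<Sum>i\<le>k. ?c i *\<^sub>R x ^ i * (?c (k - i) *\<^sub>R x ^ (k - i)))"
    unfolding sqrt_one_minus_def by (rule Cauchy_product[OF ns ns])
  also have "\<dots> = (\<Sum>k. ((-1) ^ k * real (1 choose k)) *\<^sub>R x ^ k)"
  proof -
    have "(\<Sum>i\<le>k. ?c i *\<^sub>R x ^ i * (?c (k - i) *\<^sub>R x ^ (k - i)))
        = (\<Sum>i\<le>k. ?c i * ?c (k - i)) *\<^sub>R x ^ k" for k
      unfolding scaleR_sum_left by (rule sum.cong) (auto simp flip: power_add)
    then show ?thesis
      by (simp add: sqrt_one_minus_coeff_convolution)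
  qed
  also have "\<dots> = (\<Sum>k\<in>{0,1}. ((-1) ^ k * real (1 choose k)) *\<^sub>R x ^ k)"
    by (rule suminf_finite) auto
  also have "\<dots> = 1 - x"
    by simp
  finally show ?thesis .
qed

lemma sqrt_one_minus_commute:
  fixes x :: "'a::{real_normed_algebra_1, banach}"
  assumes "norm x < 1" and "y * x = x * y"
  shows "y * sqrt_one_minus x = sqrt_one_minus x * y"
proof -
  have summable: "summable (\<lambda>n. sqrt_one_minus_coeff n *\<^sub>R x ^ n)"
    by (rule summable_norm_cancel[OF summable_norm_sqrt_one_minus_series[OF assms(1)]])
  have "y * x ^ n = x ^ n * y" for n
    by (induction n) (simp_all, metis mult.assoc assms(2))
  then show ?thesis
    unfolding sqrt_one_minus_def
      bounded_linear.suminf[OF bounded_linear_mult_right summable]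
      bounded_linear.suminf[OF bounded_linear_mult_left summable]
    by simp
qed

lemma cstar_sqrt_one_minus:
  fixes x :: "'a::cstar_algebra"
  assumes "norm x < 1" and "cstar x = x"
  shows "cstar (sqrt_one_minus x) = sqrt_one_minus x"
proof -
  have summable: "summable (\<lambda>n. sqrt_one_minus_coeff n *\<^sub>R x ^ n)"
    by (rule summable_norm_cancel[OF summable_norm_sqrt_one_minus_series[OF assms(1)]])
  show ?thesis
    unfolding sqrt_one_minus_def bounded_linear.suminf[OF bounded_linear_cstar summable]
    by (simp add: cstar_scaleR cstar_power assms(2))
qed

section \<open>Contractivity of *-endomorphisms\<close>

lemma selfadjoint_sqrt_complement:
  fixes h :: "'a::cstar_algebra"
  assumes h: "cstar h = h" and t: "norm h < t"
  obtains G where "cstar G = G" and "h * G = G * h" and "G * G = (t * t) *\<^sub>R 1 - h * h"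
proof
  have t0: "t > 0"
    using t norm_ge_zero[of h] by linarith
  define x where "x = (1 / (t * t)) *\<^sub>R (h * h)"
  have "norm x \<le> (norm h * norm h) / (t * t)"
    using t0 norm_mult_ineq[of h h] by (simp add: x_def divide_right_mono)
  also have "\<dots> < 1"
    using t t0 by (simp add: divide_less_eq mult_strict_mono')
  finally have x: "norm x < 1" .
  show "cstar (t *\<^sub>R sqrt_one_minus x) = t *\<^sub>R sqrt_one_minus x"
    using cstar_sqrt_one_minus[OF x] by (simp add: cstar_scaleR x_def cstar_mult h)
  show "h * (t *\<^sub>R sqrt_one_minus x) = (t *\<^sub>R sqrt_one_minus x) * h"
    using sqrt_one_minus_commute[OF x] by (simp add: x_def mult.assoc)
  have "(t *\<^sub>R sqrt_one_minus x) * (t *\<^sub>R sqrt_one_minus x) = (t * t) *\<^sub>R (1 - x)"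
    by (simp add: sqrt_one_minus_square[OF x])
  also have "\<dots> = (t * t) *\<^sub>R 1 - h * h"
    using t0 by (simp add: x_def scaleR_diff_right)
  finally show "(t *\<^sub>R sqrt_one_minus x) * (t *\<^sub>R sqrt_one_minus x) = (t * t) *\<^sub>R 1 - h * h" .
qed

lemma selfadjoint_eq_real_part_of_scaled_unitary:
  fixes h :: "'a::cstar_algebra"
  assumes h: "cstar h = h" and t: "norm h < t"
  obtains u where "cstar u * u = (t * t) *\<^sub>R 1" and "u + cstar u = h + h"
proof -
  obtain G where G: "cstar G = G" and hG: "h * G = G * h" and GG: "G * G = (t * t) *\<^sub>R 1 - h * h"
    using selfadjoint_sqrt_complement[OF h t] .
  define u where "u = h + scaleC \<i> G"
  have u: "cstar u = h + scaleC (- \<i>) G"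
    by (simp add: u_def cstar_add cstar_scaleC h G)
  have "cstar u * u = h * h + (h * scaleC \<i> G + scaleC (- \<i>) G * h) + scaleC (- \<i>) G * scaleC \<i> G"
    unfolding u by (simp add: u_def distrib_left distrib_right add.assoc)
  also have "\<dots> = h * h + (scaleC \<i> (h * G) + scaleC (- \<i>) (G * h)) + scaleC (\<i> * - \<i>) (G * G)"
    by (simp only: mult_scaleC_left mult_scaleC_right scaleC_scaleC)
  also have "scaleC \<i> (h * G) + scaleC (- \<i>) (G * h) = 0"
    by (simp add: hG flip: scaleC_add_left)
  finally have "cstar u * u = (t * t) *\<^sub>R 1"
    by (simp add: GG scaleC_one)
  moreover have "u + cstar u = h + h + (scaleC \<i> G + scaleC (- \<i>) G)"
    unfolding u by (simp only: u_def add_ac)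
  then have "u + cstar u = h + h"
    by (simp flip: scaleC_add_left)
  ultimately show ?thesis
    using that by blast
qed

lemma norm_star_endo_selfadjoint_le:
  fixes \<phi> :: "'a::cstar_algebra \<Rightarrow> 'a"
  assumes \<phi>: "star_endo \<phi>" and h: "cstar h = h"
  shows "norm (\<phi> h) \<le> norm h"
proof (rule dense_ge)
  fix t assume t: "norm h < t"
  then have t0: "t > 0"
    using norm_ge_zero[of h] by linarith
  obtain u where uu: "cstar u * u = (t * t) *\<^sub>R 1" and u: "u + cstar u = h + h"
    using selfadjoint_eq_real_part_of_scaled_unitary[OF h t] .
  have lin: "clinear_map \<phi>" and mult: "\<And>a b. \<phi> (a * b) = \<phi> a * \<phi> b"
    and star: "\<And>a. \<phi> (cstar a) = cstar (\<phi> a)"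
    using \<phi> unfolding star_endo_def by blast+
  have "norm (\<phi> 1) \<le> 1"
    using star[of 1] mult[of 1 1] by (intro norm_projection_le_one) simp_all
  have "norm (\<phi> u) * norm (\<phi> u) = norm (cstar (\<phi> u) * \<phi> u)"
    by (simp add: cstar_identity)
  also have "cstar (\<phi> u) * \<phi> u = (t * t) *\<^sub>R \<phi> 1"
    by (simp add: uu clinear_mapD[OF lin] flip: star mult)
  also have "norm \<dots> \<le> t * t"
    using \<open>norm (\<phi> 1) \<le> 1\<close> t0 by (simp add: mult_left_le)
  finally have "norm (\<phi> u) \<le> t"
    using power2_le_imp_le[of "norm (\<phi> u)" t] t0 by (simp add: power2_eq_square)
  have "\<phi> h + \<phi> h = \<phi> u + cstar (\<phi> u)"
    by (metis u clinear_mapD(1)[OF lin] star)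
  then have "norm (\<phi> h + \<phi> h) \<le> norm (\<phi> u) + norm (cstar (\<phi> u))"
    by (simp only: norm_triangle_ineq)
  with \<open>norm (\<phi> u) \<le> t\<close> show "norm (\<phi> h) \<le> t"
    by (simp flip: scaleR_2)
qed

lemma norm_star_endo_le:
  fixes \<phi> :: "'a::cstar_algebra \<Rightarrow> 'a"
  assumes \<phi>: "star_endo \<phi>"
  shows "norm (\<phi> a) \<le> norm a"
proof -
  have "norm (\<phi> a) * norm (\<phi> a) = norm (\<phi> (cstar a * a))"
    using \<phi> by (simp add: cstar_identity star_endo_def)
  also have "\<dots> \<le> norm a * norm a"
    using norm_star_endo_selfadjoint_le[OF \<phi>, of "cstar a * a"]
    by (simp add: cstar_mult cstar_cstar cstar_identity)
  finally show ?thesis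
    using power2_le_imp_le[of "norm (\<phi> a)" "norm a"] by (simp add: power2_eq_square)
qed

section \<open>Transfer operators\<close>

lemma bounded_linear_if_continuous_clinear:
  fixes f :: "'a::cstar_algebra \<Rightarrow> 'b::cstar_algebra"
  assumes cont: "continuous_on UNIV f" and lin: "clinear_map f"
  shows "bounded_linear f"
proof -
  note f = clinear_mapD[OF lin]
  obtain d where d: "d > 0" "\<And>z. dist z 0 < d \<Longrightarrow> dist (f z) (f 0) < 1"
    using cont unfolding continuous_on_iff by (meson UNIV_I zero_less_one)
  have "norm (f a) \<le> norm a * (2 / d)" for a
  proof (cases "a = 0")
    case False
    define r where "r = d / (2 * norm a)"
    have r: "r > 0" "norm (r *\<^sub>R a) = d / 2" "1 / r = norm a * (2 / d)"
      using False d by (simp_all add: r_def)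
    then have "norm (f (r *\<^sub>R a)) < 1"
      using d(1) d(2)[of "r *\<^sub>R a"] by (simp add: dist_norm f(4))
    then have "norm (f a) < 1 / r"
      using r by (simp add: f field_simps)
    then show ?thesis
      using r by simp
  qed (simp add: f)
  then show ?thesis
    by (rule bounded_linear_intro[rotated 2]) (simp_all add: f)
qed

locale transfer_system =
  fixes \<alpha> L :: "'g::linordered_ab_group_add \<Rightarrow> 'a::cstar_algebra \<Rightarrow> 'a"
  assumes endo_action: "endo_action \<alpha>"
    and transfer_action: "complete_transfer_action \<alpha> L"
begin

lemma alpha_zero: "\<alpha> 0 = id"
  using endo_action by (simp add: endo_action_def)

lemma alpha_add: "0 \<le> x \<Longrightarrow> 0 \<le> y \<Longrightarrow> \<alpha> (x + y) c = \<alpha> x (\<alpha> y c)"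
  using endo_action by (simp add: endo_action_def)

lemma star_endo_alpha: "0 \<le> x \<Longrightarrow> star_endo (\<alpha> x)"
  using endo_action by (simp add: endo_action_def)

lemma alpha_mult: "0 \<le> x \<Longrightarrow> \<alpha> x (c * d) = \<alpha> x c * \<alpha> x d"
  using star_endo_alpha by (simp add: star_endo_def)

lemma alpha_cstar: "0 \<le> x \<Longrightarrow> \<alpha> x (cstar c) = cstar (\<alpha> x c)"
  using star_endo_alpha by (simp add: star_endo_def)

lemma norm_alpha_le: "0 \<le> x \<Longrightarrow> norm (\<alpha> x c) \<le> norm c"
  using star_endo_alpha norm_star_endo_le by blast

lemma L_clinear: "0 \<le> x \<Longrightarrow> clinear_map (L x)"
  using transfer_action by (simp add: complete_transfer_action_def)

lemma L_positive: "0 \<le> x \<Longrightarrow> positive_elem c \<Longrightarrow> positive_elem (L x c)"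
  using transfer_action by (simp add: complete_transfer_action_def)

lemma L_alpha_mult: "0 \<le> x \<Longrightarrow> L x (\<alpha> x c * d) = c * L x d"
  using transfer_action by (simp add: complete_transfer_action_def)

lemma alpha_L: "0 \<le> x \<Longrightarrow> \<alpha> x (L x c) = \<alpha> x 1 * c * \<alpha> x 1"
  using transfer_action by (simp add: complete_transfer_action_def)

lemma bounded_linear_L: "0 \<le> x \<Longrightarrow> bounded_linear (L x)"
  using transfer_action L_clinear
  by (simp add: complete_transfer_action_def bounded_linear_if_continuous_clinear)

lemma L_selfadjoint:
  assumes x: "0 \<le> x" and h: "cstar h = h"
  shows "cstar (L x h) = L x h"
proof -
  note L = clinear_mapD[OF L_clinear[OF x]]
  have selfadjoint: "cstar (L x (cstar c * c)) = L x (cstar c * c)" for c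
  proof -
    have "positive_elem (L x (cstar c * c))"
      using L_positive[OF x] by (auto simp: positive_elem_def)
    then show ?thesis
      by (auto simp: positive_elem_def cstar_mult cstar_cstar)
  qed
  define P where "P = cstar (h + 1) * (h + 1)"
  define Q where "Q = cstar (h - 1) * (h - 1)"
  have "P - Q = 4 *\<^sub>R h"
    unfolding P_def Q_def
    by (simp add: cstar_add cstar_diff h algebra_simps scaleR_add_left[of 2 2, simplified] scaleR_2)
  then have "4 *\<^sub>R L x h = L x P - L x Q"
    by (simp flip: L(3) L(6))
  moreover have "cstar (L x P) = L x P" and "cstar (L x Q) = L x Q"
    unfolding P_def Q_def by (rule selfadjoint)+
  ultimately have "cstar (4 *\<^sub>R L x h) = 4 *\<^sub>R L x h"
    by (simp add: cstar_diff)
  then show ?thesis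
    by (simp add: cstar_scaleR)
qed

lemma L_cstar:
  assumes x: "0 \<le> x"
  shows "L x (cstar c) = cstar (L x c)"
proof -
  note L = clinear_mapD[OF L_clinear[OF x]]
  define h where "h = (1/2) *\<^sub>R (c + cstar c)"
  define k where "k = scaleC (- (\<i> / 2)) (c - cstar c)"
  have h: "cstar h = h"
    by (simp add: h_def cstar_scaleR cstar_add cstar_cstar add.commute)
  have "cstar k = scaleC (\<i> / 2) (- (c - cstar c))"
    by (simp add: k_def cstar_scaleC cstar_diff cstar_cstar)
  then have k: "cstar k = k"
    by (simp only: k_def scaleC_minus_right scaleC_minus_left)
  have ik: "scaleC \<i> k = (1/2) *\<^sub>R (c - cstar c)"
    by (simp add: k_def scaleC_scaleC scaleR_scaleC)
  have c: "c = h + scaleC \<i> k" and c': "cstar c = h - scaleC \<i> k"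
    unfolding ik h_def by (simp_all add: algebra_simps flip: scaleR_add_left)
  have "L x (cstar c) = L x h - scaleC \<i> (L x k)"
    by (simp add: c' L)
  also have "\<dots> = cstar (L x h + scaleC \<i> (L x k))"
    by (simp add: cstar_add cstar_scaleC L_selfadjoint[OF x h] L_selfadjoint[OF x k] scaleC_minus_left)
  also have "L x h + scaleC \<i> (L x k) = L x c"
    by (simp add: c L)
  finally show ?thesis .
qed

lemma L_mult_alpha:
  assumes x: "0 \<le> x"
  shows "L x (c * \<alpha> x d) = L x c * d"
proof -
  have "L x (c * \<alpha> x d) = cstar (L x (\<alpha> x (cstar d) * cstar c))"
    by (simp add: L_cstar[OF x] alpha_cstar[OF x] cstar_mult cstar_cstar flip: L_cstar[OF x])
  also have "\<dots> = L x c * d"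
    by (simp add: L_alpha_mult[OF x] L_cstar[OF x] cstar_mult cstar_cstar)
  finally show ?thesis .
qed

lemma norm_L_le_sqrt_onorm:
  assumes x: "0 \<le> x"
  shows "norm (L x c) \<le> sqrt (onorm (L x)) * norm c"
proof -
  let ?M = "onorm (L x)" and ?p = "\<alpha> x 1"
  have M0: "?M \<ge> 0"
    using onorm_pos_le bounded_linear_L[OF x] by blast
  have "\<alpha> x (cstar (L x c)) = ?p * cstar c * ?p"
    using alpha_cstar[OF x, of "L x c"] alpha_L[OF x, of c] alpha_cstar[OF x, of 1]
    by (simp add: cstar_mult mult.assoc)
  then have "cstar (L x c) * L x c = L x (?p * cstar c * ?p * c)"
    using L_alpha_mult[OF x, of "cstar (L x c)" c] by simp
  then have "norm (L x c) * norm (L x c) = norm (L x (?p * cstar c * ?p * c))"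
    by (metis cstar_identity)
  also have "\<dots> \<le> ?M * norm (?p * cstar c * ?p * c)"
    using onorm bounded_linear_L[OF x] by blast
  also have "\<dots> \<le> ?M * (norm c * norm c)"
  proof (intro mult_left_mono M0)
    have "norm (?p * cstar c * ?p * c) \<le> norm ?p * norm (cstar c) * norm ?p * norm c"
      by (meson norm_mult_ineq order_trans mult_right_mono norm_ge_zero)
    also have "\<dots> \<le> 1 * norm c * 1 * norm c"
      using norm_alpha_le[OF x, of 1] by (intro mult_mono) auto
    finally show "norm (?p * cstar c * ?p * c) \<le> norm c * norm c"
      by simp
  qed
  also have "\<dots> = (sqrt ?M * norm c) * (sqrt ?M * norm c)"
    using M0 by (simp add: algebra_simps)
  finally show ?thesis
    using power2_le_imp_le[of "norm (L x c)" "sqrt ?M * norm c"] M0 by (simp add: power2_eq_square)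
qed

lemma norm_L_le:
  assumes x: "0 \<le> x"
  shows "norm (L x c) \<le> norm c"
proof -
  define M where "M = onorm (L x)"
  have M0: "M \<ge> 0"
    unfolding M_def using onorm_pos_le bounded_linear_L[OF x] by blast
  have "M \<le> sqrt M"
    unfolding M_def using norm_L_le_sqrt_onorm[OF x] by (intro onorm_le)
  have "sqrt M \<le> 1"
  proof (rule ccontr)
    assume "\<not> sqrt M \<le> 1"
    then have "sqrt M * 1 < sqrt M * sqrt M"
      by (intro mult_strict_left_mono) auto
    with M0 \<open>M \<le> sqrt M\<close> show False
      by simp
  qed
  have "norm (L x c) \<le> M * norm c"
    unfolding M_def using onorm bounded_linear_L[OF x] by blast
  also have "\<dots> \<le> 1 * norm c"
    using \<open>sqrt M \<le> 1\<close> by (intro mult_right_mono) auto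
  finally show ?thesis
    by simp
qed

end

section \<open>Absolutely summable families\<close>

lemma summable_on_norm_infsum_le_reindex:
  fixes f :: "'s \<Rightarrow> 'a::banach" and h :: "'u \<Rightarrow> real"
  assumes inj: "inj_on \<pi> S" and le: "\<And>z. z \<in> S \<Longrightarrow> norm (f z) \<le> h (\<pi> z)"
    and h: "h summable_on UNIV"
  shows "f summable_on S" and "norm (infsum f S) \<le> infsum h (\<pi> ` S)"
proof -
  have "h summable_on (\<pi> ` S)"
    using h by (rule summable_on_subset_banach) auto
  then have h\<pi>: "(h \<circ> \<pi>) summable_on S"
    using summable_on_reindex[OF inj] by blast
  have norm_f: "(\<lambda>z. norm (f z)) summable_on S"
    by (rule summable_on_comparison_test[OF h\<pi>]) (use le in auto)
  then show "f summable_on S"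
    by (rule abs_summable_summable)
  have "norm (infsum f S) \<le> infsum (\<lambda>z. norm (f z)) S"
    by (rule norm_infsum_bound[OF norm_f])
  also have "\<dots> \<le> infsum (h \<circ> \<pi>) S"
    by (rule infsum_mono[OF norm_f h\<pi>]) (use le in auto)
  also have "\<dots> = infsum h (\<pi> ` S)"
    by (rule infsum_reindex[OF inj, symmetric])
  finally show "norm (infsum f S) \<le> infsum h (\<pi> ` S)" .
qed

lemma summable_on_norm_infsum3_le:
  fixes f1 f2 f3 :: "'s \<Rightarrow> 'a::banach" and h :: "'u \<Rightarrow> real"
  assumes h: "h summable_on UNIV" and h_nonneg: "\<And>u. h u \<ge> 0"
    and inj: "inj_on p1 S1" "inj_on p2 S2" "inj_on p3 S3"
    and le: "\<And>z. z \<in> S1 \<Longrightarrow> norm (f1 z) \<le> h (p1 z)"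
      "\<And>z. z \<in> S2 \<Longrightarrow> norm (f2 z) \<le> h (p2 z)"
      "\<And>z. z \<in> S3 \<Longrightarrow> norm (f3 z) \<le> h (p3 z)"
    and disjoint: "p1 ` S1 \<inter> p2 ` S2 = {}" "p1 ` S1 \<inter> p3 ` S3 = {}" "p2 ` S2 \<inter> p3 ` S3 = {}"
  shows "f1 summable_on S1" and "f2 summable_on S2" and "f3 summable_on S3"
    and "norm (infsum f1 S1 + (infsum f2 S2 + infsum f3 S3)) \<le> infsum h UNIV"
proof -
  note t1 = summable_on_norm_infsum_le_reindex[OF inj(1) le(1) h]
    and t2 = summable_on_norm_infsum_le_reindex[OF inj(2) le(2) h]
    and t3 = summable_on_norm_infsum_le_reindex[OF inj(3) le(3) h]
  show "f1 summable_on S1" "f2 summable_on S2" "f3 summable_on S3"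
    using t1 t2 t3 by auto
  have h_on: "h summable_on U" for U
    using h by (rule summable_on_subset_banach) auto
  have "norm (infsum f1 S1 + (infsum f2 S2 + infsum f3 S3))
      \<le> norm (infsum f1 S1) + (norm (infsum f2 S2) + norm (infsum f3 S3))"
    by (meson add_left_mono norm_triangle_ineq order_trans)
  also have "\<dots> \<le> infsum h (p1 ` S1) + (infsum h (p2 ` S2) + infsum h (p3 ` S3))"
    using t1(2) t2(2) t3(2) by (intro add_mono)
  also have "\<dots> = infsum h (p1 ` S1 \<union> (p2 ` S2 \<union> p3 ` S3))"
    using disjoint by (simp add: infsum_Un_disjoint h_on Int_Un_distrib)
  also have "\<dots> \<le> infsum h UNIV"
    by (rule infsum_mono_neutral[OF h_on h_on]) (auto simp: h_nonneg)
  finally show "norm (infsum f1 S1 + (infsum f2 S2 + infsum f3 S3)) \<le> infsum h UNIV" .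
qed

lemma infsum_mult_right_invariant:
  fixes f :: "'s \<Rightarrow> 'a::real_normed_algebra"
  assumes "f summable_on S" and "\<And>s. s \<in> S \<Longrightarrow> f s * p = f s"
  shows "infsum f S * p = infsum f S"
proof -
  have "((\<lambda>s. f s * p) has_sum (infsum f S * p)) S"
    using has_sum_bounded_linear[OF bounded_linear_mult_left has_sum_infsum[OF assms(1)]] .
  then show ?thesis
    using infsum_cong[of S "\<lambda>s. f s * p" f] assms(2) by (simp add: infsumI)
qed

lemma infsum_mult_left_invariant:
  fixes f :: "'s \<Rightarrow> 'a::real_normed_algebra"
  assumes "f summable_on S" and "\<And>s. s \<in> S \<Longrightarrow> p * f s = f s"
  shows "p * infsum f S = infsum f S"
proof -
  have "((\<lambda>s. p * f s) has_sum (p * infsum f S)) S"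
    using has_sum_bounded_linear[OF bounded_linear_mult_right has_sum_infsum[OF assms(1)]] .
  then show ?thesis
    using infsum_cong[of S "\<lambda>s. p * f s" f] assms(2) by (simp add: infsumI)
qed

lemma sum_list_infsum_mult_right_invariant:
  fixes xs :: "(('s \<Rightarrow> 'a::real_normed_algebra) \<times> 's set) list"
  assumes "\<forall>(f, S) \<in> set xs. f summable_on S \<and> (\<forall>s \<in> S. f s * p = f s)"
  shows "(\<Sum>(f, S)\<leftarrow>xs. infsum f S) * p = (\<Sum>(f, S)\<leftarrow>xs. infsum f S)"
  using assms by (induction xs) (auto simp: distrib_right infsum_mult_right_invariant)

lemma sum_list_infsum_mult_left_invariant:
  fixes xs :: "(('s \<Rightarrow> 'a::real_normed_algebra) \<times> 's set) list"
  assumes "\<forall>(f, S) \<in> set xs. f summable_on S \<and> (\<forall>s \<in> S. p * f s = f s)"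
  shows "p * (\<Sum>(f, S)\<leftarrow>xs. infsum f S) = (\<Sum>(f, S)\<leftarrow>xs. infsum f S)"
  using assms by (induction xs) (auto simp: distrib_left infsum_mult_left_invariant)

definition norm_convolution ::
  "('g::ab_group_add \<Rightarrow> 'a::real_normed_vector) \<Rightarrow> ('g \<Rightarrow> 'b::real_normed_vector) \<Rightarrow> 'g \<Rightarrow> real" where
  "norm_convolution a b g = (\<Sum>\<^sub>\<infinity>u. norm (a u) * norm (b (g - u)))"

lemma has_sum_norm_product:
  assumes a: "(\<lambda>u. norm (a u)) summable_on UNIV" and b: "(\<lambda>v. norm (b v)) summable_on UNIV"
  shows "((\<lambda>(u, v). norm (a u) * norm (b v)) has_sum l1_norm a * l1_norm b) UNIV"
proof -
  have rows: "((\<lambda>v. norm (a u) * norm (b v)) has_sum norm (a u) * l1_norm b) UNIV" for u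
    unfolding l1_norm_def by (rule has_sum_cmult_right[OF has_sum_infsum[OF b]])
  have total: "((\<lambda>u. norm (a u) * l1_norm b) has_sum l1_norm a * l1_norm b) UNIV"
    unfolding l1_norm_def by (rule has_sum_cmult_left[OF has_sum_infsum[OF a]])
  have "(\<lambda>(u, v). norm (a u) * norm (b v)) summable_on UNIV \<times> UNIV"
    by (rule summable_on_SigmaI[where g = "\<lambda>u. norm (a u) * l1_norm b"])
      (use rows total in \<open>auto simp: summable_on_def\<close>)
  then have "((\<lambda>(u, v). norm (a u) * norm (b v)) has_sum l1_norm a * l1_norm b) (UNIV \<times> UNIV)"
    by (intro has_sum_SigmaI[OF _ total]) (use rows in auto)
  then show ?thesis
    by simp
qed

lemma
  fixes a :: "'g::ab_group_add \<Rightarrow> 'a::real_normed_vector" and b :: "'g \<Rightarrow> 'b::real_normed_vector"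
  assumes a: "(\<lambda>u. norm (a u)) summable_on UNIV" and b: "(\<lambda>v. norm (b v)) summable_on UNIV"
  shows summable_on_norm_convolution_terms: "(\<lambda>u. norm (a u) * norm (b (g - u))) summable_on UNIV"
    and has_sum_norm_convolution: "(norm_convolution a b has_sum l1_norm a * l1_norm b) UNIV"
proof -
  have "bij_betw (\<lambda>(g, u). (u, g - u)) (UNIV :: ('g \<times> 'g) set) UNIV"
    by (rule bij_betwI[where g = "\<lambda>(u, v). (u + v, u)"]) auto
  from has_sum_reindex_bij_betw[OF this, where f = "\<lambda>(u, v). norm (a u) * norm (b v)"]
    has_sum_norm_product[OF a b]
  have shifted: "((\<lambda>(g, u). norm (a u) * norm (b (g - u))) has_sum l1_norm a * l1_norm b) (UNIV \<times> UNIV)"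
    by (simp add: case_prod_unfold)
  then show rows: "(\<lambda>u. norm (a u) * norm (b (g - u))) summable_on UNIV" for g
    using summable_on_SigmaD1[where f = "\<lambda>g u. norm (a u) * norm (b (g - u))"
        and A = UNIV and B = "\<lambda>_. UNIV" and x = g]
    by (auto simp: summable_on_def)
  show "(norm_convolution a b has_sum l1_norm a * l1_norm b) UNIV"
    using has_sum_SigmaD[OF shifted] rows unfolding norm_convolution_def by auto
qed

section \<open>The twisted convolution product\<close>

lemma summable_on_norm_l1: "c \<in> l1 \<alpha> \<Longrightarrow> (\<lambda>g. norm (c g)) summable_on UNIV"
  by (simp add: l1_def)

context transfer_system
begin

lemma alpha_one_idem: "0 \<le> x \<Longrightarrow> \<alpha> x 1 * \<alpha> x 1 = \<alpha> x 1"
  using alpha_mult[of x 1 1] by simp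

lemma l1_mult_alpha_one: "c \<in> l1 \<alpha> \<Longrightarrow> 0 \<le> x \<Longrightarrow> c x * \<alpha> x 1 = c x"
  unfolding l1_def using alpha_one_idem by (auto simp: mult.assoc)

lemma l1_alpha_one_mult: "c \<in> l1 \<alpha> \<Longrightarrow> 0 \<le> x \<Longrightarrow> \<alpha> x 1 * c (- x) = c (- x)"
  unfolding l1_def using alpha_one_idem by (force simp flip: mult.assoc)

lemma norm_mult_alpha_le: "0 \<le> x \<Longrightarrow> norm (c * \<alpha> x d) \<le> norm c * norm d"
  by (meson norm_alpha_le mult_left_mono norm_ge_zero norm_mult_ineq order_trans)

lemma norm_alpha_mult_le: "0 \<le> x \<Longrightarrow> norm (\<alpha> x c * d) \<le> norm c * norm d"
  by (meson norm_alpha_le mult_right_mono norm_ge_zero norm_mult_ineq order_trans)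

lemma norm_L_mult_le: "0 \<le> x \<Longrightarrow> norm (L x (c * d)) \<le> norm c * norm d"
  by (meson norm_L_le norm_mult_ineq order_trans)

text \<open>Each index set is mapped injectively onto the index \<open>u\<close> of the \<open>a\<close>-factor, into the
  disjoint ranges \<open>u > g\<close>, \<open>u < 0\<close>, \<open>0 \<le> u \<le> g\<close> (for \<open>g \<ge> 0\<close>) and \<open>u > 0\<close>,
  \<open>u < g\<close>, \<open>g \<le> u \<le> 0\<close> (for \<open>g < 0\<close>).\<close>

lemma l1_mult_nonneg_summable_le:
  assumes "a \<in> l1 \<alpha>" and "b \<in> l1 \<alpha>" and g: "0 \<le> g"
  shows "\<forall>(f, S) \<in> set (prod_terms \<alpha> L a b g). f summable_on S"
    and "norm (l1_mult \<alpha> L a b g) \<le> norm_convolution a b g"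
proof -
  define f1 where "f1 = (\<lambda>(x, y). a x * \<alpha> (x - y) (b (- y)))"
  define S1 where "S1 = {(x, y). 0 < x \<and> 0 < y \<and> g = x - y}"
  define f2 where "f2 = (\<lambda>(x, y). L x (a (- x) * b y))"
  define S2 where "S2 = {(x, y). 0 < x \<and> 0 < y \<and> g = y - x}"
  define f3 where "f3 = (\<lambda>(x, y). a x * \<alpha> x (b y))"
  define S3 where "S3 = {(x, y). 0 \<le> x \<and> 0 \<le> y \<and> g = x + y}"
  define h where "h = (\<lambda>u. norm (a u) * norm (b (g - u)))"
  have terms: "prod_terms \<alpha> L a b g = [(f1, S1), (f2, S2), (f3, S3)]"
    using g by (simp add: prod_terms_def f1_def f2_def f3_def S1_def S2_def S3_def)
  have h: "h summable_on UNIV"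
    unfolding h_def using summable_on_norm_l1[OF assms(1)] summable_on_norm_l1[OF assms(2)]
    by (rule summable_on_norm_convolution_terms)
  have inj: "inj_on fst S1" "inj_on (uminus \<circ> fst) S2" "inj_on fst S3"
    by (auto simp: inj_on_def S1_def S2_def S3_def)
  have le1: "norm (f1 z) \<le> h (fst z)" if "z \<in> S1" for z
    using that norm_mult_alpha_le[OF g] by (cases z) (simp add: S1_def f1_def h_def)
  have le2: "norm (f2 z) \<le> h ((uminus \<circ> fst) z)" if "z \<in> S2" for z
    using that norm_L_mult_le[of "fst z"] by (auto simp: f2_def S2_def h_def algebra_simps)
  have le3: "norm (f3 z) \<le> h (fst z)" if "z \<in> S3" for z
    using that norm_mult_alpha_le[of "fst z"] by (auto simp: f3_def S3_def h_def algebra_simps)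
  have disjoint: "fst ` S1 \<inter> (uminus \<circ> fst) ` S2 = {}" "fst ` S1 \<inter> fst ` S3 = {}"
    "(uminus \<circ> fst) ` S2 \<inter> fst ` S3 = {}"
    using g by (auto simp: S1_def S2_def S3_def)
  note sums = summable_on_norm_infsum3_le[OF h _ inj(1) inj(2) inj(3) le1 le2 le3 disjoint]
  show "\<forall>(f, S) \<in> set (prod_terms \<alpha> L a b g). f summable_on S"
    using sums(1-3) by (simp add: h_def terms)
  show "norm (l1_mult \<alpha> L a b g) \<le> norm_convolution a b g"
    using sums(4) by (simp add: l1_mult_def terms norm_convolution_def h_def)
qed

lemma l1_mult_neg_summable_le:
  assumes "a \<in> l1 \<alpha>" and "b \<in> l1 \<alpha>" and g: "g < 0"
  shows "\<forall>(f, S) \<in> set (prod_terms \<alpha> L a b g). f summable_on S"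
    and "norm (l1_mult \<alpha> L a b g) \<le> norm_convolution a b g"
proof -
  define f1 where "f1 = (\<lambda>(x, y). \<alpha> (y - x) (a x) * b (- y))"
  define S1 where "S1 = {(x, y). 0 < x \<and> 0 < y \<and> g = x - y}"
  define f2 where "f2 = (\<lambda>(x, y). L y (a (- x) * b y))"
  define S2 where "S2 = {(x, y). 0 < x \<and> 0 < y \<and> g = y - x}"
  define f3 where "f3 = (\<lambda>(x, y). \<alpha> y (a (- x)) * b (- y))"
  define S3 where "S3 = {(x, y). 0 \<le> x \<and> 0 \<le> y \<and> g = - x - y}"
  define h where "h = (\<lambda>u. norm (a u) * norm (b (g - u)))"
  have terms: "prod_terms \<alpha> L a b g = [(f1, S1), (f2, S2), (f3, S3)]"
    using g by (simp add: prod_terms_def f1_def f2_def f3_def S1_def S2_def S3_def not_le[symmetric])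
  have h: "h summable_on UNIV"
    unfolding h_def using summable_on_norm_l1[OF assms(1)] summable_on_norm_l1[OF assms(2)]
    by (rule summable_on_norm_convolution_terms)
  have inj: "inj_on fst S1" "inj_on (uminus \<circ> fst) S2" "inj_on (uminus \<circ> fst) S3"
    by (auto simp: inj_on_def S1_def S2_def S3_def)
  have le1: "norm (f1 z) \<le> h (fst z)" if "z \<in> S1" for z
    using that g norm_alpha_mult_le by (cases z) (simp add: S1_def f1_def h_def)
  have le2: "norm (f2 z) \<le> h ((uminus \<circ> fst) z)" if "z \<in> S2" for z
    using that norm_L_mult_le by (cases z) (auto simp: S2_def f2_def h_def)
  have le3: "norm (f3 z) \<le> h ((uminus \<circ> fst) z)" if "z \<in> S3" for z
    using that norm_alpha_mult_le by (cases z) (simp add: S3_def f3_def h_def)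
  have disjoint: "fst ` S1 \<inter> (uminus \<circ> fst) ` S2 = {}" "fst ` S1 \<inter> (uminus \<circ> fst) ` S3 = {}"
    "(uminus \<circ> fst) ` S2 \<inter> (uminus \<circ> fst) ` S3 = {}"
    using g by (auto simp: S1_def S2_def S3_def)
  note sums = summable_on_norm_infsum3_le[OF h _ inj(1) inj(2) inj(3) le1 le2 le3 disjoint]
  show "\<forall>(f, S) \<in> set (prod_terms \<alpha> L a b g). f summable_on S"
    using sums(1-3) by (simp add: h_def terms)
  show "norm (l1_mult \<alpha> L a b g) \<le> norm_convolution a b g"
    using sums(4) by (simp add: l1_mult_def terms norm_convolution_def h_def)
qed

lemma L_mult_l1_alpha_one:
  assumes b: "b \<in> l1 \<alpha>" and x: "0 \<le> x" and yx: "0 \<le> y - x"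
  shows "L x (c * b y) * \<alpha> (y - x) 1 = L x (c * b y)"
proof -
  have "\<alpha> x (\<alpha> (y - x) 1) = \<alpha> y 1"
    using alpha_add[OF x yx, of 1] by simp
  then show ?thesis
    using L_mult_alpha[OF x, of "c * b y" "\<alpha> (y - x) 1"] l1_mult_alpha_one[OF b, of y] assms
    by (simp add: mult.assoc)
qed

lemma alpha_one_L_mult_l1:
  assumes a: "a \<in> l1 \<alpha>" and y: "0 \<le> y" and xy: "0 \<le> x - y"
  shows "\<alpha> (x - y) 1 * L y (a (- x) * c) = L y (a (- x) * c)"
proof -
  have "\<alpha> y (\<alpha> (x - y) 1) = \<alpha> x 1"
    using alpha_add[OF y xy, of 1] by simp
  then show ?thesis
    using L_alpha_mult[OF y, of "\<alpha> (x - y) 1" "a (- x) * c"] l1_alpha_one_mult[OF a, of x] assms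
    by (simp flip: mult.assoc)
qed

lemma alpha_l1_mult_alpha_one:
  assumes b: "b \<in> l1 \<alpha>" and "0 \<le> x" and "0 \<le> y"
  shows "\<alpha> x (b y) * \<alpha> (x + y) 1 = \<alpha> x (b y)"
  using alpha_add[of x y 1] alpha_mult[of x "b y" "\<alpha> y 1"] l1_mult_alpha_one[OF b, of y] assms
  by simp

lemma alpha_one_mult_alpha_l1:
  assumes a: "a \<in> l1 \<alpha>" and "0 \<le> x" and "0 \<le> y"
  shows "\<alpha> (y + x) 1 * \<alpha> y (a (- x)) = \<alpha> y (a (- x))"
  using alpha_add[of y x 1] alpha_mult[of y "\<alpha> x 1" "a (- x)"] l1_alpha_one_mult[OF a, of x] assms
  by simp

lemma l1_mult_nonneg_mult_alpha_one:
  assumes a: "a \<in> l1 \<alpha>" and b: "b \<in> l1 \<alpha>" and g: "0 \<le> g"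
  shows "l1_mult \<alpha> L a b g * \<alpha> g 1 = l1_mult \<alpha> L a b g"
proof -
  have "f s * \<alpha> g 1 = f s" if "(f, S) \<in> set (prod_terms \<alpha> L a b g)" "s \<in> S" for f S s
  proof -
    obtain x y where s: "s = (x, y)"
      by fastforce
    from that g consider
        "f = (\<lambda>(x, y). a x * \<alpha> (x - y) (b (- y)))" "g = x - y"
      | "f = (\<lambda>(x, y). L x (a (- x) * b y))" "0 < x" "0 < y" "g = y - x"
      | "f = (\<lambda>(x, y). a x * \<alpha> x (b y))" "0 \<le> x" "0 \<le> y" "g = x + y"
      unfolding s by (auto simp: prod_terms_def)
    then show ?thesis
    proof cases
      case 1
      then show ?thesis
        using alpha_mult[OF g, of "b (- y)" 1] by (simp add: s mult.assoc)
    next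
      case 2
      then have "0 \<le> x" and "0 \<le> y - x"
        using g by simp_all
      with 2 show ?thesis
        using L_mult_l1_alpha_one[OF b, of x y "a (- x)"] by (simp add: s)
    next
      case 3
      then show ?thesis
        using alpha_l1_mult_alpha_one[OF b, of x y] by (simp add: s mult.assoc)
    qed
  qed
  then show ?thesis
    unfolding l1_mult_def using l1_mult_nonneg_summable_le(1)[OF a b g]
    by (intro sum_list_infsum_mult_right_invariant) blast
qed

lemma alpha_one_mult_l1_mult_neg:
  assumes a: "a \<in> l1 \<alpha>" and b: "b \<in> l1 \<alpha>" and g: "g < 0"
  shows "\<alpha> (- g) 1 * l1_mult \<alpha> L a b g = l1_mult \<alpha> L a b g"
proof -
  have g': "0 \<le> - g"
    using g by simp
  have "\<alpha> (- g) 1 * f s = f s" if "(f, S) \<in> set (prod_terms \<alpha> L a b g)" "s \<in> S" for f S s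
  proof -
    obtain x y where s: "s = (x, y)"
      by fastforce
    from that g consider
        "f = (\<lambda>(x, y). \<alpha> (y - x) (a x) * b (- y))" "g = x - y"
      | "f = (\<lambda>(x, y). L y (a (- x) * b y))" "0 < x" "0 < y" "- g = x - y"
      | "f = (\<lambda>(x, y). \<alpha> y (a (- x)) * b (- y))" "0 \<le> x" "0 \<le> y" "- g = y + x"
      unfolding s by (auto simp: prod_terms_def not_le[symmetric])
    then show ?thesis
    proof cases
      case 1
      then show ?thesis
        using alpha_mult[OF g', of 1 "a x"] by (simp add: s flip: mult.assoc)
    next
      case 2
      then have "0 \<le> y" and "0 \<le> x - y"
        using g' by simp_all
      with 2 show ?thesis
        using alpha_one_L_mult_l1[OF a, of y x "b y"] by (simp add: s)
    next
      case 3
      then show ?thesis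
        using alpha_one_mult_alpha_l1[OF a, of x y] by (simp add: s flip: mult.assoc)
    qed
  qed
  then show ?thesis
    unfolding l1_mult_def using l1_mult_neg_summable_le(1)[OF a b g]
    by (intro sum_list_infsum_mult_left_invariant) blast
qed

lemma
  assumes "a \<in> l1 \<alpha>" and "b \<in> l1 \<alpha>"
  shows prod_terms_summable: "\<forall>(f, S) \<in> set (prod_terms \<alpha> L a b g). f summable_on S"
    and norm_l1_mult_le: "norm (l1_mult \<alpha> L a b g) \<le> norm_convolution a b g"
  using l1_mult_nonneg_summable_le[OF assms, of g] l1_mult_neg_summable_le[OF assms, of g]
  by (meson not_le)+

lemma l1_mult_in_l1:
  assumes a: "a \<in> l1 \<alpha>" and b: "b \<in> l1 \<alpha>"
  shows "l1_mult \<alpha> L a b \<in> l1 \<alpha>"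
proof -
  have "norm_convolution a b summable_on UNIV"
    using has_sum_norm_convolution[OF summable_on_norm_l1[OF a] summable_on_norm_l1[OF b]]
    by (rule has_sum_imp_summable)
  then have "(\<lambda>g. norm (l1_mult \<alpha> L a b g)) summable_on UNIV"
    by (rule summable_on_comparison_test) (simp_all add: norm_l1_mult_le[OF a b])
  moreover have "l1_mult \<alpha> L a b x \<in> {c * \<alpha> x 1 | c. True}" if "0 \<le> x" for x
    using l1_mult_nonneg_mult_alpha_one[OF a b that]
    by (intro CollectI exI[of _ "l1_mult \<alpha> L a b x"]) simp
  moreover have "l1_mult \<alpha> L a b (- x) \<in> {\<alpha> x 1 * c | c. True}" if "0 \<le> x" for x
  proof (cases "x = 0")
    case True
    then show ?thesis
      using alpha_zero by auto
  next
    case False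
    then have "- x < 0"
      using that by simp
    from alpha_one_mult_l1_mult_neg[OF a b this] show ?thesis
      by (intro CollectI exI[of _ "l1_mult \<alpha> L a b (- x)"]) simp
  qed
  ultimately show ?thesis
    unfolding l1_def by blast
qed

lemma l1_norm_l1_mult_le:
  assumes a: "a \<in> l1 \<alpha>" and b: "b \<in> l1 \<alpha>"
  shows "l1_norm (l1_mult \<alpha> L a b) \<le> l1_norm a * l1_norm b"
  unfolding l1_norm_def
proof (rule has_sum_mono)
  show "((\<lambda>g. norm (l1_mult \<alpha> L a b g)) has_sum (\<Sum>\<^sub>\<infinity>g. norm (l1_mult \<alpha> L a b g))) UNIV"
    using summable_on_norm_l1[OF l1_mult_in_l1[OF a b]] by (rule has_sum_infsum)
  show "(norm_convolution a b has_sum (\<Sum>\<^sub>\<infinity>g. norm (a g)) * (\<Sum>\<^sub>\<infinity>g. norm (b g))) UNIV"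
    using has_sum_norm_convolution[OF summable_on_norm_l1[OF a] summable_on_norm_l1[OF b]]
    by (simp add: l1_norm_def)
qed (rule norm_l1_mult_le[OF a b])

end

theorem proposition4p2:
  fixes \<alpha> L :: "'g::linordered_ab_group_add \<Rightarrow> 'a::cstar_algebra \<Rightarrow> 'a"
  assumes "endo_action \<alpha>"
    and "complete_transfer_action \<alpha> L"
    and "a \<in> l1 \<alpha>" and "b \<in> l1 \<alpha>"
  shows "(\<forall>g. \<forall>(f, S) \<in> set (prod_terms \<alpha> L a b g). f summable_on S)
         \<and> l1_mult \<alpha> L a b \<in> l1 \<alpha>
         \<and> l1_norm (l1_mult \<alpha> L a b) \<le> l1_norm a * l1_norm b"
proof -
  interpret transfer_system \<alpha> L
    using assms(1,2) by unfold_locales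
  show ?thesis
    using prod_terms_summable l1_mult_in_l1 l1_norm_l1_mult_le assms(3,4) by blast
qed

end
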